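(* Let $p$ be a prime and $\alpha=(\ell_1,\dots,\ell_m)$ a type, and let $A(\alpha)=\prod_{i=1}^m\mathbb{Z}/p^{\ell_i}\mathbb{Z}$. (a) If $\{\mathfrak z_1,\dots,\mathfrak z_r\}$ is a minimal generating set of $A(\alpha)$ (i.e. a generating set no proper subset of which generates) with $|\mathfrak z_i|=p^{d_i}$ and $\ell_1=d_1\ge d_2\ge\cdots\ge d_r\ge 1$, then $r=m$ and $d_i\ge \ell_i$ for all $i$. (b) Conversely, given integers $d_1,\dots,d_m$ with $\ell_1=d_1\ge\cdots\ge d_m\ge 1$ and $d_i\ge\ell_i$ for all $i$, there exists a minimal generating set $\{\mathfrak z_1,\dots,\mathfrak z_m\}$ of $A(\alpha)$ with $|\mathfrak z_i|=p^{d_i}$ for all $i$.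
   Context: A type is a tuple of integers $(k_1,\dots,k_n)$ with $k_1\ge\cdots\ge k_n\ge1$. For $\mathfrak x$ in a group, $|\mathfrak x|$ denotes its order. *)

theory Defs
  imports "HOL-Algebra.Algebra"
begin

text \<open>A type of length m: a weakly decreasing tuple (l_0,...,l_{m-1}) of positive integers,
  m >= 1, indexed from 0.\<close>
definition is_type :: "(nat \<Rightarrow> nat) \<Rightarrow> nat \<Rightarrow> bool" where
  "is_type l m \<longleftrightarrow> 1 \<le> m \<and> (\<forall>i j. i \<le> j \<longrightarrow> j < m \<longrightarrow> l j \<le> l i) \<and> (\<forall>i<m. 1 \<le> l i)"

definition A_grp :: "nat \<Rightarrow> (nat \<Rightarrow> nat) \<Rightarrow> nat \<Rightarrow> (nat \<Rightarrow> int) monoid" where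
  "A_grp p l m = product_group {..<m} (\<lambda>i. integer_mod_group (p ^ l i))"

definition minimal_generating_set :: "('a, 'b) monoid_scheme \<Rightarrow> 'a set \<Rightarrow> bool" where
  "minimal_generating_set G S \<longleftrightarrow> S \<subseteq> carrier G \<and> generate G S = carrier G \<and>
     (\<forall>T. T \<subset> S \<longrightarrow> generate G T \<noteq> carrier G)"

end

theory Submission
  imports Defs
begin

text \<open>Reduction modulo p maps A(alpha) onto (Z/pZ)^m, and a family generates A(alpha) as soon
  as it generates it modulo p, because p is nilpotent on A(alpha). Hence a minimal generating set
  reduces to a basis of (Z/pZ)^m and has exactly m elements. An element of order p^e with e < l_t
  has its t-th coordinate divisible by p, so the first i+1 coordinates modulo p are spanned by the
  generators of order at least p^(l_i); there must be at least i+1 of them, which for decreasing d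
  forces d_i \<ge> l_i. Conversely (indexing from 0) the elements z_i = p^(l_0 - d_i) e_0 + e_i have
  order p^(d_i) and generate A(alpha); since there are only m of them they form a minimal
  generating set.\<close>

section \<open>Linear algebra modulo p\<close>

lemma card_le_if_spans_mod:
  fixes v :: "'j \<Rightarrow> 'i \<Rightarrow> int"
  assumes p: "1 < p" and fin: "finite I" "finite J"
    and spans: "\<And>w. w \<in> (\<Pi>\<^sub>E t\<in>I. {0..<int p}) \<Longrightarrow>
      \<exists>c. \<forall>t\<in>I. int p dvd w t - (\<Sum>j\<in>J. c j * v j t)"
  shows "card I \<le> card J"
proof -
  define F where "F c = (\<lambda>t\<in>I. (\<Sum>j\<in>J. c j * v j t) mod int p)" for c
  define D where "D = (\<Pi>\<^sub>E j\<in>J. {0..<int p})"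
  have F_mod: "F (\<lambda>j\<in>J. c j mod int p) = F c" for c
  proof -
    have "int p dvd (\<Sum>j\<in>J. (\<lambda>j\<in>J. c j mod int p) j * v j t) - (\<Sum>j\<in>J. c j * v j t)" for t
      unfolding sum_subtractf[symmetric]
      by (intro dvd_sum) (simp add: left_diff_distrib[symmetric] mod_eq_dvd_iff[symmetric])
    then show ?thesis by (simp add: F_def fun_eq_iff mod_eq_dvd_iff)
  qed
  have "(\<Pi>\<^sub>E t\<in>I. {0..<int p}) \<subseteq> F ` D"
  proof
    fix w assume w: "w \<in> (\<Pi>\<^sub>E t\<in>I. {0..<int p})"
    obtain c where c: "\<forall>t\<in>I. int p dvd w t - (\<Sum>j\<in>J. c j * v j t)"
      using spans[OF w] by blast
    have "w = F c"
    proof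
      fix t show "w t = F c t"
        using w c by (cases "t \<in> I") (auto simp: F_def PiE_iff extensional_def mod_eq_dvd_iff[symmetric])
    qed
    moreover have "(\<lambda>j\<in>J. c j mod int p) \<in> D" using p by (simp add: D_def)
    ultimately show "w \<in> F ` D" using F_mod by (metis image_eqI)
  qed
  then have "card (\<Pi>\<^sub>E t\<in>I. {0..<int p}) \<le> card D"
    using surj_card_le[of D] by (simp add: D_def fin finite_PiE)
  then have "p ^ card I \<le> p ^ card J" by (simp add: D_def card_PiE fin)
  with p show ?thesis by (simp add: power_le_imp_le_exp)
qed

lemma exists_nontrivial_relation_mod:
  fixes v :: "'j \<Rightarrow> 'i \<Rightarrow> int"
  assumes p: "1 < p" and fin: "finite I" "finite J" and card: "card I < card J"
  obtains a j0 where "j0 \<in> J" "\<not> int p dvd a j0" "\<And>t. t \<in> I \<Longrightarrow> int p dvd (\<Sum>j\<in>J. a j * v j t)"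
proof -
  define F where "F c = (\<lambda>t\<in>I. (\<Sum>j\<in>J. c j * v j t) mod int p)" for c
  define D where "D = (\<Pi>\<^sub>E j\<in>J. {0..<int p})"
  have "\<not> inj_on F D"
  proof
    assume "inj_on F D"
    moreover have "F ` D \<subseteq> (\<Pi>\<^sub>E t\<in>I. {0..<int p})" using p by (auto simp: F_def)
    ultimately have "card D \<le> card (\<Pi>\<^sub>E t\<in>I. {0..<int p})"
      by (intro card_inj_on_le) (simp_all add: fin finite_PiE)
    then have "p ^ card J \<le> p ^ card I" by (simp add: D_def card_PiE fin)
    with p card show False by (simp add: power_le_imp_le_exp leD)
  qed
  then obtain c c' where cc: "c \<in> D" "c' \<in> D" "F c = F c'" "c \<noteq> c'"
    unfolding inj_on_def by blast
  then obtain j0 where j0: "j0 \<in> J" "c j0 \<noteq> c' j0"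
    unfolding D_def by (metis PiE_arb ext)
  show ?thesis
  proof
    show "j0 \<in> J" by (fact j0(1))
    have "c j0 \<in> {0..<int p}" "c' j0 \<in> {0..<int p}" using cc j0 by (auto simp: D_def)
    with j0 show "\<not> int p dvd c j0 - c' j0"
      by (auto simp: mod_eq_dvd_iff[symmetric])
    fix t assume "t \<in> I"
    then have "(\<Sum>j\<in>J. c j * v j t) mod int p = (\<Sum>j\<in>J. c' j * v j t) mod int p"
      using fun_cong[OF cc(3), of t] by (simp add: F_def)
    then show "int p dvd (\<Sum>j\<in>J. (c j - c' j) * v j t)"
      by (simp add: mod_eq_dvd_iff left_diff_distrib sum_subtractf)
  qed
qed

lemma exists_combination_mod_prime:
  fixes v :: "'j \<Rightarrow> 'i \<Rightarrow> int"
  assumes p: "Factorial_Ring.prime p" and fin: "finite I" "finite J" and card: "card I < card J"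
  obtains j0 c q where "j0 \<in> J"
    "\<And>t. t \<in> I \<Longrightarrow> v j0 t = (\<Sum>j\<in>J - {j0}. c j * v j t) + int p * q t"
proof -
  obtain a j0 where j0: "j0 \<in> J" "\<not> int p dvd a j0"
    and rel: "\<And>t. t \<in> I \<Longrightarrow> int p dvd (\<Sum>j\<in>J. a j * v j t)"
    using exists_nontrivial_relation_mod[OF prime_gt_1_nat[OF p] fin card] by blast
  obtain b where b: "int p dvd b * a j0 - 1"
  proof -
    have "coprime (int p) (a j0)" using p j0(2) by (simp add: prime_imp_coprime)
    then obtain u w where "u * a j0 + w * int p = 1"
      using bezout_int[of "a j0" "int p"] by (auto simp: coprime_iff_gcd_eq_1 gcd.commute)
    then have "u * a j0 - 1 = int p * - w" by (simp add: algebra_simps)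
    then show ?thesis by (intro that[of u]) (metis dvdI)
  qed
  \<comment> \<open>multiplying the relation by an inverse b of a j0 modulo p isolates v j0\<close>
  define c where "c j = - b * a j" for j
  define q where "q t = (v j0 t - (\<Sum>j\<in>J - {j0}. c j * v j t)) div int p" for t
  show ?thesis
  proof (rule that[OF j0(1)])
    fix t assume t: "t \<in> I"
    have split: "(\<Sum>j\<in>J. a j * v j t) = a j0 * v j0 t + (\<Sum>j\<in>J - {j0}. a j * v j t)"
      using j0(1) fin(2) by (simp add: sum.remove)
    have "v j0 t - (\<Sum>j\<in>J - {j0}. c j * v j t) = b * (\<Sum>j\<in>J. a j * v j t) - (b * a j0 - 1) * v j0 t"
      by (simp add: split c_def algebra_simps sum_distrib_left sum_negf)
    also have "int p dvd \<dots>" by (rule dvd_diff[OF dvd_mult[OF rel[OF t]] dvd_mult2[OF b]])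
    finally show "v j0 t = (\<Sum>j\<in>J - {j0}. c j * v j t) + int p * q t"
      by (simp add: q_def)
  qed
qed

section \<open>Coordinates in A(alpha)\<close>

definition A_class :: "nat \<Rightarrow> (nat \<Rightarrow> nat) \<Rightarrow> nat \<Rightarrow> (nat \<Rightarrow> int) \<Rightarrow> nat \<Rightarrow> int" where
  "A_class p l m v = (\<lambda>t\<in>{..<m}. v t mod int p ^ l t)"

definition A_span ::
  "nat \<Rightarrow> (nat \<Rightarrow> nat) \<Rightarrow> nat \<Rightarrow> 'a set \<Rightarrow> ('a \<Rightarrow> nat \<Rightarrow> int) \<Rightarrow> (nat \<Rightarrow> int) set" where
  "A_span p l m J z = range (\<lambda>c. A_class p l m (\<lambda>t. \<Sum>j\<in>J. c j * z j t))"

lemma group_A_grp: "group (A_grp p l m)"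
  by (simp add: A_grp_def)

lemma carrier_A_grp: "0 < p \<Longrightarrow> carrier (A_grp p l m) = (\<Pi>\<^sub>E t\<in>{..<m}. {0..<int p ^ l t})"
  by (simp add: A_grp_def carrier_integer_mod_group)

lemma one_A_grp: "\<one>\<^bsub>A_grp p l m\<^esub> = A_class p l m (\<lambda>_. 0)"
  by (simp add: A_grp_def A_class_def)

lemma A_class_in_carrier: "0 < p \<Longrightarrow> A_class p l m v \<in> carrier (A_grp p l m)"
  by (auto simp: carrier_A_grp A_class_def)

lemma A_class_of_carrier: "0 < p \<Longrightarrow> x \<in> carrier (A_grp p l m) \<Longrightarrow> A_class p l m x = x"
  by (auto simp: carrier_A_grp A_class_def PiE_iff fun_eq_iff extensional_def)

lemma A_class_eq_iff:
  "A_class p l m v = A_class p l m w \<longleftrightarrow> (\<forall>t<m. int p ^ l t dvd v t - w t)"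
  by (auto simp: A_class_def fun_eq_iff mod_eq_dvd_iff)

lemma A_class_cong: "t < m \<Longrightarrow> int p ^ l t dvd v t - A_class p l m v t"
  by (simp add: A_class_def minus_mod_eq_mult_div)

lemma A_class_mult:
  "A_class p l m v \<otimes>\<^bsub>A_grp p l m\<^esub> A_class p l m w = A_class p l m (\<lambda>t. v t + w t)"
  by (simp add: A_grp_def A_class_def fun_eq_iff mod_add_eq)

lemma inv_A_class: "0 < p \<Longrightarrow> inv\<^bsub>A_grp p l m\<^esub> A_class p l m v = A_class p l m (\<lambda>t. - v t)"
  by (rule group.inv_equality[OF group_A_grp])
    (simp_all add: A_class_mult A_class_in_carrier one_A_grp)

lemma pow_A_grp:
  assumes "0 < p" "x \<in> carrier (A_grp p l m)"
  shows "x [^]\<^bsub>A_grp p l m\<^esub> (n::nat) = A_class p l m (\<lambda>t. int n * x t)"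
proof (induction n)
  case 0
  show ?case using assms by (simp add: one_A_grp A_class_eq_iff)
next
  case (Suc n)
  have "x [^]\<^bsub>A_grp p l m\<^esub> Suc n = A_class p l m (\<lambda>t. int n * x t) \<otimes>\<^bsub>A_grp p l m\<^esub> A_class p l m x"
    using Suc A_class_of_carrier[OF assms] by simp
  then show ?case by (simp add: A_class_mult algebra_simps)
qed

lemma int_pow_A_grp:
  assumes "0 < p" "x \<in> carrier (A_grp p l m)"
  shows "x [^]\<^bsub>A_grp p l m\<^esub> (c::int) = A_class p l m (\<lambda>t. c * x t)"
proof (cases "c < 0")
  case True
  then have "x [^]\<^bsub>A_grp p l m\<^esub> c = inv\<^bsub>A_grp p l m\<^esub> (x [^]\<^bsub>A_grp p l m\<^esub> nat (- c))"
    by (simp only: int_pow_def2 if_True)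
  with True show ?thesis by (simp add: pow_A_grp[OF assms] inv_A_class[OF assms(1)])
next
  case False
  then have "x [^]\<^bsub>A_grp p l m\<^esub> c = x [^]\<^bsub>A_grp p l m\<^esub> nat c"
    by (simp only: int_pow_def2 if_False)
  with False show ?thesis by (simp add: pow_A_grp[OF assms])
qed

lemma pow_A_grp_eq_one_iff:
  assumes "0 < p" "x \<in> carrier (A_grp p l m)"
  shows "x [^]\<^bsub>A_grp p l m\<^esub> (n::nat) = \<one>\<^bsub>A_grp p l m\<^esub> \<longleftrightarrow> (\<forall>t<m. int p ^ l t dvd int n * x t)"
  using assms by (simp add: pow_A_grp one_A_grp A_class_eq_iff)

lemma A_class_sum_in_A_span: "A_class p l m (\<lambda>t. \<Sum>j\<in>J. c j * z j t) \<in> A_span p l m J z"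
  by (simp add: A_span_def)

lemma A_span_subgroup:
  assumes "0 < p"
  shows "subgroup (A_span p l m J z) (A_grp p l m)"
proof
  show "A_span p l m J z \<subseteq> carrier (A_grp p l m)"
    using assms by (auto simp: A_span_def A_class_in_carrier)
  show "\<one>\<^bsub>A_grp p l m\<^esub> \<in> A_span p l m J z"
    unfolding A_span_def one_A_grp by (rule range_eqI[of _ _ "\<lambda>_. 0"]) simp
next
  fix x y assume "x \<in> A_span p l m J z" "y \<in> A_span p l m J z"
  then obtain c c' where xy: "x = A_class p l m (\<lambda>t. \<Sum>j\<in>J. c j * z j t)"
    "y = A_class p l m (\<lambda>t. \<Sum>j\<in>J. c' j * z j t)"
    by (auto simp: A_span_def)
  have "x \<otimes>\<^bsub>A_grp p l m\<^esub> y = A_class p l m (\<lambda>t. \<Sum>j\<in>J. (c j + c' j) * z j t)"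
    by (simp add: xy A_class_mult distrib_right sum.distrib)
  then show "x \<otimes>\<^bsub>A_grp p l m\<^esub> y \<in> A_span p l m J z"
    by (simp add: A_class_sum_in_A_span)
next
  fix x assume "x \<in> A_span p l m J z"
  then obtain c where x: "x = A_class p l m (\<lambda>t. \<Sum>j\<in>J. c j * z j t)"
    by (auto simp: A_span_def)
  show "inv\<^bsub>A_grp p l m\<^esub> x \<in> A_span p l m J z"
    using A_class_sum_in_A_span[where c = "\<lambda>j. - c j"]
    by (simp add: x inv_A_class[OF assms] sum_negf)
qed

lemma generate_A_grp_eq_A_span:
  assumes "0 < p" "finite J" "z ` J \<subseteq> carrier (A_grp p l m)"
  shows "generate (A_grp p l m) (z ` J) = A_span p l m J z"
proof
  interpret group "A_grp p l m" by (rule group_A_grp)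
  have "z j \<in> A_span p l m J z" if "j \<in> J" for j
  proof -
    have "(\<Sum>k\<in>J. (if k = j then 1 else 0) * z k t) = z j t" for t
      using that assms(2) by (simp add: sum.remove)
    then have "z j = A_class p l m (\<lambda>t. \<Sum>k\<in>J. (if k = j then 1 else 0) * z k t)"
      using that assms A_class_of_carrier[OF assms(1), of "z j"] by auto
    then show ?thesis by (simp add: A_class_sum_in_A_span)
  qed
  then show "generate (A_grp p l m) (z ` J) \<subseteq> A_span p l m J z"
    by (intro generate_subgroup_incl A_span_subgroup assms(1)) auto
  have "A_class p l m (\<lambda>t. \<Sum>j\<in>J'. c j * z j t) \<in> generate (A_grp p l m) (z ` J)"
    if "J' \<subseteq> J" for J' c
    using finite_subset[OF that assms(2)] that
  proof (induction J' rule: finite_induct)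
    case empty
    then show ?case using generate.one by (simp flip: one_A_grp)
  next
    case (insert j J')
    have zj: "z j \<in> generate (A_grp p l m) (z ` J)"
      using insert.prems by (intro generate.incl) auto
    have "A_class p l m (\<lambda>t. \<Sum>k\<in>insert j J'. c k * z k t) =
        A_class p l m (\<lambda>t. \<Sum>k\<in>J'. c k * z k t) \<otimes>\<^bsub>A_grp p l m\<^esub> z j [^]\<^bsub>A_grp p l m\<^esub> c j"
      using insert.hyps insert.prems assms
      by (simp add: int_pow_A_grp[OF assms(1), of "z j"] image_subset_iff A_class_mult add.commute)
    then show ?case
      using insert subgroup_int_pow_closed[OF generate_is_subgroup[OF assms(3)] zj]
      by (auto intro: generate.eng)
  qed
  then show "A_span p l m J z \<subseteq> generate (A_grp p l m) (z ` J)"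
    by (auto simp: A_span_def)
qed

lemma mem_generate_A_grp_iff:
  fixes z :: "'a \<Rightarrow> nat \<Rightarrow> int"
  assumes "0 < p" "finite J" "z ` J \<subseteq> carrier (A_grp p l m)" "g \<in> carrier (A_grp p l m)"
  shows "g \<in> generate (A_grp p l m) (z ` J) \<longleftrightarrow>
    (\<exists>c. \<forall>t<m. int p ^ l t dvd g t - (\<Sum>j\<in>J. c j * z j t))"
proof -
  have "g \<in> A_span p l m J z \<longleftrightarrow> (\<exists>c. A_class p l m g = A_class p l m (\<lambda>t. \<Sum>j\<in>J. c j * z j t))"
    using A_class_of_carrier[OF assms(1,4)] by (auto simp: A_span_def)
  then show ?thesis by (simp add: generate_A_grp_eq_A_span[OF assms(1-3)] A_class_eq_iff)
qed

section \<open>Minimal generating sets of A(alpha)\<close>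

lemma A_grp_component_dvd_if_ord_less:
  assumes p: "1 < p" and x: "x \<in> carrier (A_grp p l m)"
    and ord: "group.ord (A_grp p l m) x = p ^ e" and t: "t < m" "e < l t"
  shows "int p dvd x t"
proof -
  interpret group "A_grp p l m" by (rule group_A_grp)
  have "x [^]\<^bsub>A_grp p l m\<^esub> p ^ (l t - 1) = \<one>\<^bsub>A_grp p l m\<^esub>"
    using x ord t by (simp add: pow_eq_id le_imp_power_dvd)
  then have "int p ^ (l t - 1) * int p dvd int p ^ (l t - 1) * x t"
    using p x t by (simp add: pow_A_grp_eq_one_iff flip: power_Suc2)
  with p show ?thesis by simp
qed

lemma card_le_if_generate_A_grp:
  fixes z :: "'a \<Rightarrow> nat \<Rightarrow> int"
  assumes p: "1 < p" and fin: "finite J" and zJ: "z ` J \<subseteq> carrier (A_grp p l m)"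
    and gen: "generate (A_grp p l m) (z ` J) = carrier (A_grp p l m)"
    and I: "I \<subseteq> {..<m}" "\<And>t. t \<in> I \<Longrightarrow> 1 \<le> l t"
    and J': "J' \<subseteq> J" "\<And>j t. j \<in> J - J' \<Longrightarrow> t \<in> I \<Longrightarrow> int p dvd z j t"
  shows "card I \<le> card J'"
proof (rule card_le_if_spans_mod[OF p])
  show "finite I" using I(1) finite_subset by blast
  show "finite J'" using J'(1) fin finite_subset by blast
  fix w assume w: "w \<in> (\<Pi>\<^sub>E t\<in>I. {0..<int p})"
  define g where "g = (\<lambda>t\<in>{..<m}. if t \<in> I then w t else 0)"
  have "(if t \<in> I then w t else 0) \<in> {0..<int p ^ l t}" for t
  proof (cases "t \<in> I")
    case True
    have "w t \<in> {0..<int p}" using w True by blast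
    moreover have "int p \<le> int p ^ l t" using p I(2)[OF True] by (simp add: self_le_power)
    ultimately have "w t \<in> {0..<int p ^ l t}" by (meson atLeastLessThan_iff less_le_trans)
    with True show ?thesis by simp
  qed (use p in simp)
  then have "g \<in> carrier (A_grp p l m)"
    using p by (simp add: g_def carrier_A_grp)
  then obtain c where c: "\<forall>t<m. int p ^ l t dvd g t - (\<Sum>j\<in>J. c j * z j t)"
    using gen mem_generate_A_grp_iff[OF _ fin zJ, where g = g] p by auto
  have "int p dvd w t - (\<Sum>j\<in>J'. c j * z j t)" if t: "t \<in> I" for t
  proof -
    have "t < m" using I(1) t by auto
    then have "int p ^ l t dvd w t - (\<Sum>j\<in>J. c j * z j t)"
      using c t by (auto simp: g_def)
    moreover have "int p dvd int p ^ l t" using I(2)[OF t] by (simp add: dvd_power)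
    ultimately have "int p dvd w t - (\<Sum>j\<in>J. c j * z j t)"
      by (rule dvd_trans[rotated])
    moreover have "int p dvd (\<Sum>j\<in>J - J'. c j * z j t)"
      using J'(2) t by (auto intro!: dvd_sum)
    moreover have "(\<Sum>j\<in>J. c j * z j t) = (\<Sum>j\<in>J - J'. c j * z j t) + (\<Sum>j\<in>J'. c j * z j t)"
      using fin J'(1) by (simp add: sum.subset_diff)
    then have "w t - (\<Sum>j\<in>J'. c j * z j t) =
        (w t - (\<Sum>j\<in>J. c j * z j t)) + (\<Sum>j\<in>J - J'. c j * z j t)"
      by simp
    ultimately show ?thesis by (simp only: dvd_add)
  qed
  then show "\<exists>c. \<forall>t\<in>I. int p dvd w t - (\<Sum>j\<in>J'. c j * z j t)" by blast
qed

lemma card_generators_ord_ge_A_grp: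
  fixes z :: "'a \<Rightarrow> nat \<Rightarrow> int"
  assumes p: "1 < p" and ty: "is_type l m" and fin: "finite J"
    and zJ: "z ` J \<subseteq> carrier (A_grp p l m)"
    and gen: "generate (A_grp p l m) (z ` J) = carrier (A_grp p l m)"
    and ord: "\<And>j. j \<in> J \<Longrightarrow> group.ord (A_grp p l m) (z j) = p ^ d j"
    and i: "i < m"
  shows "i < card {j \<in> J. l i \<le> d j}"
proof -
  have "card {..i} \<le> card {j \<in> J. l i \<le> d j}"
  proof (rule card_le_if_generate_A_grp[OF p fin zJ gen])
    show "{..i} \<subseteq> {..<m}" using i by auto
    show "1 \<le> l t" if "t \<in> {..i}" for t using ty i that by (simp add: is_type_def)
    fix j t assume j: "j \<in> J - {j \<in> J. l i \<le> d j}" and t: "t \<in> {..i}"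
    have "l i \<le> l t" using ty t i by (simp add: is_type_def)
    with j have "d j < l t" by auto
    with j t i zJ show "int p dvd z j t"
      by (intro A_grp_component_dvd_if_ord_less[OF p _ ord]) auto
  qed auto
  then show ?thesis by simp
qed

\<comment> \<open>Nakayama's lemma for A: generating A modulo p already generates A, because p is nilpotent on A.\<close>
lemma generate_A_grp_if_spans_mod_p:
  fixes z :: "'a \<Rightarrow> nat \<Rightarrow> int"
  assumes p: "0 < p" and fin: "finite T" and zT: "z ` T \<subseteq> carrier (A_grp p l m)"
    and spans: "\<And>g. \<exists>c g'. \<forall>t<m. int p ^ l t dvd g t - (\<Sum>j\<in>T. c j * z j t) - int p * g' t"
  shows "generate (A_grp p l m) (z ` T) = carrier (A_grp p l m)"
proof -
  have approx: "\<exists>c g'. \<forall>t<m. int p ^ l t dvd g t - (\<Sum>j\<in>T. c j * z j t) - int p ^ n * g' t"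
    for n g
  proof (induction n arbitrary: g)
    case 0
    show ?case by (intro exI[of _ "\<lambda>_. 0"] exI[of _ g]) simp
  next
    case (Suc n)
    obtain c g' where c: "\<forall>t<m. int p ^ l t dvd g t - (\<Sum>j\<in>T. c j * z j t) - int p ^ n * g' t"
      using Suc.IH by blast
    obtain c' g'' where c': "\<forall>t<m. int p ^ l t dvd g' t - (\<Sum>j\<in>T. c' j * z j t) - int p * g'' t"
      using spans by blast
    have "int p ^ l t dvd g t - (\<Sum>j\<in>T. (c j + int p ^ n * c' j) * z j t) - int p ^ Suc n * g'' t"
      if t: "t < m" for t
    proof -
      have eq: "g t - (\<Sum>j\<in>T. (c j + int p ^ n * c' j) * z j t) - int p ^ Suc n * g'' t =
          (g t - (\<Sum>j\<in>T. c j * z j t) - int p ^ n * g' t) +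
          int p ^ n * (g' t - (\<Sum>j\<in>T. c' j * z j t) - int p * g'' t)"
        by (simp add: algebra_simps sum.distrib sum_distrib_left)
      show ?thesis unfolding eq using c c' t by (intro dvd_add dvd_mult) auto
    qed
    then show ?case by (intro exI[of _ "\<lambda>j. c j + int p ^ n * c' j"] exI[of _ g'']) simp
  qed
  have "g \<in> generate (A_grp p l m) (z ` T)" if g: "g \<in> carrier (A_grp p l m)" for g
  proof -
    define N where "N = (\<Sum>t<m. l t)"
    obtain c g' where c: "\<forall>t<m. int p ^ l t dvd g t - (\<Sum>j\<in>T. c j * z j t) - int p ^ N * g' t"
      using approx by blast
    have "int p ^ l t dvd g t - (\<Sum>j\<in>T. c j * z j t)" if t: "t < m" for t
    proof -
      have "int p ^ l t dvd int p ^ N * g' t"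
        using t by (simp add: N_def le_imp_power_dvd member_le_sum)
      then show ?thesis using c t by (metis diff_add_cancel dvd_add)
    qed
    then show ?thesis using mem_generate_A_grp_iff[OF p fin zT g] by blast
  qed
  then show ?thesis using group.generate_incl[OF group_A_grp zT] by blast
qed

lemma generate_A_grp_remove_combination_mod_p:
  fixes z :: "'a \<Rightarrow> nat \<Rightarrow> int"
  assumes p: "0 < p" and fin: "finite J" and zJ: "z ` J \<subseteq> carrier (A_grp p l m)"
    and gen: "generate (A_grp p l m) (z ` J) = carrier (A_grp p l m)" and j0: "j0 \<in> J"
    and comb: "\<And>t. t < m \<Longrightarrow> z j0 t = (\<Sum>j\<in>J - {j0}. c j * z j t) + int p * q t"
  shows "generate (A_grp p l m) (z ` (J - {j0})) = carrier (A_grp p l m)"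
proof (rule generate_A_grp_if_spans_mod_p[OF p])
  show "finite (J - {j0})" "z ` (J - {j0}) \<subseteq> carrier (A_grp p l m)" using fin zJ by auto
  fix g
  obtain e where e: "\<forall>t<m. int p ^ l t dvd A_class p l m g t - (\<Sum>j\<in>J. e j * z j t)"
    using mem_generate_A_grp_iff[OF p fin zJ, where g = "A_class p l m g"] gen
      A_class_in_carrier[OF p] by auto
  have "int p ^ l t dvd
      g t - (\<Sum>j\<in>J - {j0}. (e j + e j0 * c j) * z j t) - int p * (e j0 * q t)"
    if t: "t < m" for t
  proof -
    have "(\<Sum>j\<in>J. e j * z j t) = e j0 * z j0 t + (\<Sum>j\<in>J - {j0}. e j * z j t)"
      using j0 fin by (simp add: sum.remove)
    then have eq: "g t - (\<Sum>j\<in>J - {j0}. (e j + e j0 * c j) * z j t) - int p * (e j0 * q t) =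
        (g t - A_class p l m g t) + (A_class p l m g t - (\<Sum>j\<in>J. e j * z j t))"
      by (simp add: comb[OF t] algebra_simps sum.distrib sum_distrib_left)
    show ?thesis unfolding eq using A_class_cong[OF t] e t by (intro dvd_add) auto
  qed
  then show "\<exists>c g'. \<forall>t<m. int p ^ l t dvd g t - (\<Sum>j\<in>J - {j0}. c j * z j t) - int p * g' t"
    by (intro exI[of _ "\<lambda>j. e j + e j0 * c j"] exI[of _ "\<lambda>t. e j0 * q t"]) simp
qed

lemma card_le_if_minimal_generating_set_A_grp:
  assumes p: "Factorial_Ring.prime p" and inj: "inj_on z {..<r}"
    and min: "minimal_generating_set (A_grp p l m) (z ` {..<r})"
  shows "r \<le> m"
proof (rule ccontr)
  assume "\<not> r \<le> m"
  then obtain j0 c q where j0: "j0 \<in> {..<r}"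
    and comb: "\<And>t. t \<in> {..<m} \<Longrightarrow> z j0 t = (\<Sum>j\<in>{..<r} - {j0}. c j * z j t) + int p * q t"
    using exists_combination_mod_prime[OF p, of "{..<m}" "{..<r}" z] by auto
  have "generate (A_grp p l m) (z ` ({..<r} - {j0})) = carrier (A_grp p l m)"
    using min comb prime_gt_0_nat[OF p]
    by (intro generate_A_grp_remove_combination_mod_p[OF _ _ _ _ j0])
      (auto simp: minimal_generating_set_def)
  moreover have "z j0 \<notin> z ` ({..<r} - {j0})" using inj j0 by (auto simp: inj_on_def)
  then have "z ` ({..<r} - {j0}) \<subset> z ` {..<r}" using j0 by auto
  ultimately show False using min by (auto simp: minimal_generating_set_def)
qed

lemma card_and_orders_of_minimal_generating_set_A_grp:
  assumes p: "Factorial_Ring.prime p" and ty: "is_type l m" and inj: "inj_on z {..<r}"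
    and min: "minimal_generating_set (A_grp p l m) (z ` {..<r})"
    and ord: "\<And>i. i < r \<Longrightarrow> group.ord (A_grp p l m) (z i) = p ^ d i"
    and mono: "\<And>i j. i \<le> j \<Longrightarrow> j < r \<Longrightarrow> d j \<le> d i"
  shows "r = m" and "i < m \<Longrightarrow> l i \<le> d i"
proof -
  have large: "i < r \<and> l i \<le> d i" if i: "i < m" for i
  proof (rule ccontr)
    assume small: "\<not> (i < r \<and> l i \<le> d i)"
    have "{j \<in> {..<r}. l i \<le> d j} \<subseteq> {..<i}"
    proof (intro subsetI, rule ccontr)
      fix j assume "j \<in> {j \<in> {..<r}. l i \<le> d j}" "j \<notin> {..<i}"
      then show False using small mono[of i j] by auto
    qed
    then have "card {j \<in> {..<r}. l i \<le> d j} \<le> i"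
      using card_mono[of "{..<i}"] by fastforce
    moreover have "i < card {j \<in> {..<r}. l i \<le> d j}"
      using min prime_gt_1_nat[OF p]
      by (intro card_generators_ord_ge_A_grp[OF _ ty _ _ _ ord i])
        (auto simp: minimal_generating_set_def)
    ultimately show False by simp
  qed
  have "m - 1 < r" using large[of "m - 1"] ty by (simp add: is_type_def)
  then show "r = m" using card_le_if_minimal_generating_set_A_grp[OF p inj min] by simp
  show "i < m \<Longrightarrow> l i \<le> d i" using large by blast
qed

section \<open>Minimal generating sets with prescribed orders\<close>

definition type_generator :: "nat \<Rightarrow> (nat \<Rightarrow> nat) \<Rightarrow> nat \<Rightarrow> (nat \<Rightarrow> nat) \<Rightarrow> nat \<Rightarrow> nat \<Rightarrow> int" where
  "type_generator p l m d i =
    (\<lambda>t\<in>{..<m}. if t = 0 then int p ^ (l 0 - d i) else if t = i then 1 else 0)"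

lemma type_generator_in_carrier:
  assumes p: "1 < p" and ty: "is_type l m" and i: "i < m" "1 \<le> d i"
  shows "type_generator p l m d i \<in> carrier (A_grp p l m)"
proof -
  have "int p ^ (l 0 - d i) < int p ^ l 0"
    using p ty i by (intro power_strict_increasing) (auto simp: is_type_def)
  moreover have "1 < int p ^ l t" if "t < m" for t
    using p ty that by (intro one_less_power) (auto simp: is_type_def)
  ultimately have "(if t = 0 then int p ^ (l 0 - d i) else if t = i then 1 else 0) \<in> {0..<int p ^ l t}"
    if "t < m" for t
    using that p by auto
  then show ?thesis using p by (simp add: type_generator_def carrier_A_grp)
qed

lemma inj_on_type_generator: "inj_on (type_generator p l m d) {..<m}"
proof (rule inj_onI, rule ccontr)
  fix i j assume ij: "i \<in> {..<m}" "j \<in> {..<m}" "i \<noteq> j"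
    and eq: "type_generator p l m d i = type_generator p l m d j"
  show False
    using fun_cong[OF eq, of i] fun_cong[OF eq, of j] ij
    by (auto simp: type_generator_def split: if_splits)
qed

lemma ord_type_generator:
  assumes p: "1 < p" and ty: "is_type l m" and i: "i < m" "1 \<le> d i" "d i \<le> l 0" "l i \<le> d i"
  shows "group.ord (A_grp p l m) (type_generator p l m d i) = p ^ d i"
proof -
  interpret group "A_grp p l m" by (rule group_A_grp)
  let ?z = "type_generator p l m d i"
  have z: "?z \<in> carrier (A_grp p l m)"
    by (rule type_generator_in_carrier[where d = d, OF p ty i(1,2)])
  have split: "int p ^ l 0 = int p ^ (l 0 - d i) * int p ^ d i"
    using i by (simp flip: power_add)
  have "(\<forall>t<m. int p ^ l t dvd int n * ?z t) \<longleftrightarrow> int p ^ d i dvd int n" for n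
  proof
    assume "\<forall>t<m. int p ^ l t dvd int n * ?z t"
    then have "int p ^ (l 0 - d i) * int p ^ d i dvd int p ^ (l 0 - d i) * int n"
      using i split by (auto simp: type_generator_def mult.commute)
    then show "int p ^ d i dvd int n" using p by simp
  next
    assume n: "int p ^ d i dvd int n"
    have "int p ^ l i dvd int p ^ d i" using i by (simp add: le_imp_power_dvd)
    then show "\<forall>t<m. int p ^ l t dvd int n * ?z t"
      using n split by (auto simp: type_generator_def intro: dvd_trans)
  qed
  then have "?z [^]\<^bsub>A_grp p l m\<^esub> n = \<one>\<^bsub>A_grp p l m\<^esub> \<longleftrightarrow> p ^ d i dvd n" for n
    using pow_A_grp_eq_one_iff[OF _ z] p by (simp flip: of_nat_power)
  then show ?thesis using ord_unique[OF z] by blast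
qed

lemma generate_type_generators:
  assumes p: "1 < p" and ty: "is_type l m" and d: "d 0 = l 0" "\<And>i. i < m \<Longrightarrow> 1 \<le> d i"
  shows "generate (A_grp p l m) (type_generator p l m d ` {..<m}) = carrier (A_grp p l m)"
proof -
  let ?z = "type_generator p l m d"
  have p0: "0 < p" using p by simp
  have m0: "0 < m" using ty by (simp add: is_type_def)
  have zS: "?z ` {..<m} \<subseteq> carrier (A_grp p l m)"
    using type_generator_in_carrier[OF p ty] d(2) by auto
  have "g \<in> generate (A_grp p l m) (?z ` {..<m})" if g: "g \<in> carrier (A_grp p l m)" for g
  proof -
    \<comment> \<open>type_generator 0 is the first unit vector because d 0 = l 0\<close>
    define c where "c j = (if j = 0 then g 0 - (\<Sum>k\<in>{1..<m}. g k * int p ^ (l 0 - d k)) else g j)"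
      for j
    have "(\<Sum>j<m. c j * ?z j t) = g t" if t: "t < m" for t
    proof (cases "t = 0")
      case True
      have "{..<m} = insert 0 {1..<m}" using m0 by auto
      then show ?thesis using True d(1) m0 by (simp add: c_def type_generator_def)
    next
      case False
      then have "(\<Sum>j<m. c j * ?z j t) = (\<Sum>j<m. if j = t then c j else 0)"
        using t by (intro sum.cong) (auto simp: type_generator_def)
      then show ?thesis using t False by (simp add: c_def)
    qed
    then have "\<exists>c. \<forall>t<m. int p ^ l t dvd g t - (\<Sum>j<m. c j * ?z j t)"
      by (intro exI[of _ c]) simp
    then show ?thesis using mem_generate_A_grp_iff[OF p0 _ zS g] by simp
  qed
  then show ?thesis using group.generate_incl[OF group_A_grp zS] by blast
qed

lemma minimal_generating_set_A_grp_if_card_le: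
  assumes p: "1 < p" and ty: "is_type l m"
    and S: "finite S" "card S \<le> m" "S \<subseteq> carrier (A_grp p l m)"
    and gen: "generate (A_grp p l m) S = carrier (A_grp p l m)"
  shows "minimal_generating_set (A_grp p l m) S"
  unfolding minimal_generating_set_def
proof (intro conjI allI impI notI S(3) gen)
  fix T assume T: "T \<subset> S" and genT: "generate (A_grp p l m) T = carrier (A_grp p l m)"
  have "card {..<m} \<le> card T"
    using T S ty genT
    by (intro card_le_if_generate_A_grp[OF p, where z = id]) (auto simp: is_type_def finite_subset)
  moreover have "card T < card S" using T S(1) by (simp add: psubset_card_mono)
  ultimately show False using S(2) by simp
qed

lemma exists_minimal_generating_set_A_grp:
  assumes p: "Factorial_Ring.prime p" and ty: "is_type l m"
    and d0: "d 0 = l 0" and mono: "\<And>i j. i \<le> j \<Longrightarrow> j < m \<Longrightarrow> d j \<le> d i"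
    and d: "\<And>i. i < m \<Longrightarrow> 1 \<le> d i" "\<And>i. i < m \<Longrightarrow> l i \<le> d i"
  shows "\<exists>z. inj_on z {..<m} \<and> minimal_generating_set (A_grp p l m) (z ` {..<m}) \<and>
    (\<forall>i<m. group.ord (A_grp p l m) (z i) = p ^ d i)"
proof (intro exI conjI allI impI)
  have p1: "1 < p" using p by (rule prime_gt_1_nat)
  show "inj_on (type_generator p l m d) {..<m}" by (rule inj_on_type_generator)
  show "minimal_generating_set (A_grp p l m) (type_generator p l m d ` {..<m})"
    using type_generator_in_carrier[OF p1 ty] d
    by (intro minimal_generating_set_A_grp_if_card_le[OF p1 ty]
        generate_type_generators[where d = d, OF p1 ty d0])
      (auto intro: card_image_le[of "{..<m}", simplified])
  fix i assume "i < m"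
  moreover have "d i \<le> l 0" using mono[of 0 i] d0 \<open>i < m\<close> by simp
  ultimately show "group.ord (A_grp p l m) (type_generator p l m d i) = p ^ d i"
    using d by (intro ord_type_generator[OF p1 ty]) auto
qed

theorem theorem3p1:
  fixes p m :: nat and l :: "nat \<Rightarrow> nat"
  assumes "Factorial_Ring.prime p" and "is_type l m"
  shows
   "(\<forall>(r::nat) (z :: nat \<Rightarrow> nat \<Rightarrow> int) (d :: nat \<Rightarrow> nat).
       1 \<le> r \<and> inj_on z {..<r} \<and> minimal_generating_set (A_grp p l m) (z ` {..<r}) \<and>
       (\<forall>i<r. group.ord (A_grp p l m) (z i) = p ^ d i) \<and>
       d 0 = l 0 \<and> (\<forall>i j. i \<le> j \<longrightarrow> j < r \<longrightarrow> d j \<le> d i) \<and> (\<forall>i<r. 1 \<le> d i)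
     \<longrightarrow> r = m \<and> (\<forall>i<m. l i \<le> d i))
    \<and>
    (\<forall>d :: nat \<Rightarrow> nat.
       d 0 = l 0 \<and> (\<forall>i j. i \<le> j \<longrightarrow> j < m \<longrightarrow> d j \<le> d i) \<and> (\<forall>i<m. 1 \<le> d i) \<and>
       (\<forall>i<m. l i \<le> d i)
     \<longrightarrow> (\<exists>z :: nat \<Rightarrow> nat \<Rightarrow> int. inj_on z {..<m} \<and>
            minimal_generating_set (A_grp p l m) (z ` {..<m}) \<and>
            (\<forall>i<m. group.ord (A_grp p l m) (z i) = p ^ d i)))"
proof (rule conjI; intro allI impI; elim conjE)
  \<comment> \<open>part (a) does not need r \<ge> 1, d 0 = l 0, nor d i \<ge> 1\<close>
  fix r :: nat and z :: "nat \<Rightarrow> nat \<Rightarrow> int" and d :: "nat \<Rightarrow> nat"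
  assume "inj_on z {..<r}" "minimal_generating_set (A_grp p l m) (z ` {..<r})"
    "\<forall>i<r. group.ord (A_grp p l m) (z i) = p ^ d i" "\<forall>i j. i \<le> j \<longrightarrow> j < r \<longrightarrow> d j \<le> d i"
  then show "r = m \<and> (\<forall>i<m. l i \<le> d i)"
    using card_and_orders_of_minimal_generating_set_A_grp[OF assms, of z r d] by blast
next
  fix d :: "nat \<Rightarrow> nat"
  assume "d 0 = l 0" "\<forall>i j. i \<le> j \<longrightarrow> j < m \<longrightarrow> d j \<le> d i" "\<forall>i<m. 1 \<le> d i" "\<forall>i<m. l i \<le> d i"
  then show "\<exists>z. inj_on z {..<m} \<and> minimal_generating_set (A_grp p l m) (z ` {..<m}) \<and>
      (\<forall>i<m. group.ord (A_grp p l m) (z i) = p ^ d i)"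
    using exists_minimal_generating_set_A_grp[OF assms, of d] by blast
qed

end
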